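(* There is an absolute constant $C$ such that the following holds. Let $v\in\mathbb{S}^{n-1}$ be fixed and let $\mathbf{u}$ be uniform on $\mathbb{S}^{n-1}$. Let $0<\epsilon<1$ and $\frac1{\sqrt n}<\alpha\le\beta\le\frac12$ with $\beta=(1+\epsilon)\alpha$, and suppose $n\alpha^2\epsilon\le\frac{1}{8e^2}$. Then \[ 1\le\frac{\Pr[|\langle v,\mathbf{u}\rangle|\ge\alpha]}{\Pr[|\langle v,\mathbf{u}\rangle|\ge\beta]}\le 1+C\,n\alpha^2\epsilon . \]
   Context: $\mathbb{S}^{n-1}$ is the unit sphere in $\mathbb{R}^n$ with its uniform (normalized surface) measure. *)

theory Defs
  imports "HOL-Analysis.Analysis"
begin

text \<open>Euclidean space R^n modelled as functions nat => real on the index set {..<n},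
  with Lebesgue measure the product measure PiM {..<n} (\<lambda>_. lborel).
  (Explicit n is needed so that the constant C can be chosen independently of n.)\<close>

definition sph_inner :: "nat \<Rightarrow> (nat \<Rightarrow> real) \<Rightarrow> (nat \<Rightarrow> real) \<Rightarrow> real" where
  "sph_inner n x y = (\<Sum>i<n. x i * y i)"

definition sph_norm :: "nat \<Rightarrow> (nat \<Rightarrow> real) \<Rightarrow> real" where
  "sph_norm n x = sqrt (sph_inner n x x)"

definition lebesgue_Rn :: "nat \<Rightarrow> (nat \<Rightarrow> real) measure" where
  "lebesgue_Rn n = PiM {..<n} (\<lambda>_. lborel)"

definition unit_ball_Rn :: "nat \<Rightarrow> (nat \<Rightarrow> real) set" where
  "unit_ball_Rn n = {x \<in> space (lebesgue_Rn n). sph_norm n x \<le> 1}"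

text \<open>Uniform (normalized surface) measure on S^{n-1}: the push-forward of the uniform
  probability measure on the unit ball under radial projection x \<mapsto> x/|x|
  (the cone-measure description of normalized surface measure).\<close>

definition unif_sphere :: "nat \<Rightarrow> (nat \<Rightarrow> real) measure" where
  "unif_sphere n = distr (uniform_measure (lebesgue_Rn n) (unit_ball_Rn n)) (lebesgue_Rn n)
     (\<lambda>x. restrict (\<lambda>i. x i / sph_norm n x) {..<n})"

definition sphere_tail :: "nat \<Rightarrow> (nat \<Rightarrow> real) \<Rightarrow> real \<Rightarrow> real" where
  "sphere_tail n v t = measure (unif_sphere n) {u \<in> space (unif_sphere n). \<bar>sph_inner n v u\<bar> \<ge> t}"

end

theory Submission
  imports Defs
begin

text \<open>Since uniform measure on the sphere is the radial projection of uniform measure on the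
  ball, \<open>Pr[|\<langle>v, u\<rangle>| \<ge> t]\<close> is the relative volume of the double cone
  \<open>{x \<in> ball. |\<langle>v, x\<rangle>| \<ge> t |x|}\<close>. Rotations are products of volume preserving shears,
  so \<open>v\<close> may be taken to be the first basis vector. Let \<open>K\<close> be the volume of the
  \<open>(n-1)\<close>-ball of radius \<open>sqrt (1 - \<alpha>\<^sup>2)\<close>.

  The cones for \<open>\<alpha>\<close> and \<open>\<beta>\<close> differ by two slabs of volume \<open>\<epsilon>\<alpha>K\<close> and by the difference of
  two cones of height \<open>\<alpha>\<close> whose slopes have ratio \<open>\<sigma> \<ge> 1 - 2\<epsilon>\<close>. Scaling the transverse
  coordinates shows that this difference is the fraction \<open>1 - \<sigma>^(n-1) \<le> 2n\<epsilon>\<close> of a cone of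
  volume \<open>O(\<alpha>K/n)\<close>, so the two cones differ by \<open>O(\<epsilon>\<alpha>K)\<close>. On the other hand the cone for
  \<open>\<beta>\<close> contains a cylinder of width \<open>1/(8n\<beta>)\<close> whose cross-section is still comparable
  to \<open>K\<close>, so its volume is \<open>\<Omega>(K/(n\<beta>))\<close>; the quotient is \<open>O(n\<alpha>\<beta>\<epsilon>) = O(n\<alpha>\<^sup>2\<epsilon>)\<close>.\<close>

section \<open>Maps scaling Lebesgue measure on \<open>\<real>\<^sup>I\<close>\<close>

abbreviation lborel_PiM :: "'i set \<Rightarrow> ('i \<Rightarrow> real) measure" where
  "lborel_PiM I \<equiv> PiM I (\<lambda>_. lborel)"

lemma measurable_fun_upd_PiM:
  assumes "i \<in> I" and [measurable]: "h \<in> borel_measurable (lborel_PiM I)"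
  shows "(\<lambda>x. x(i := h x)) \<in> lborel_PiM I \<rightarrow>\<^sub>M lborel_PiM I"
proof -
  have "(\<lambda>x k. (x(i := h x)) k) \<in> lborel_PiM I \<rightarrow>\<^sub>M lborel_PiM I"
  proof (rule measurable_PiM_single')
    show "(\<lambda>x. (x(i := h x)) k) \<in> lborel_PiM I \<rightarrow>\<^sub>M lborel" if "k \<in> I" for k
      using that by (cases "k = i") simp_all
    show "(\<lambda>x k. (x(i := h x)) k) \<in> space (lborel_PiM I) \<rightarrow> (\<Pi>\<^sub>E k\<in>I. space lborel)"
      using assms(1) by (auto simp: space_PiM PiE_def extensional_def)
  qed
  then show ?thesis by (simp add: fun_upd_def)
qed

lemma emeasure_PiM_insert_coordinate:
  assumes "finite J" "i \<notin> J" "S \<in> sets (lborel_PiM (insert i J))"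
  shows "emeasure (lborel_PiM (insert i J)) S
       = (\<integral>\<^sup>+ x. (\<integral>\<^sup>+ y. indicator S (x(i := y)) \<partial>lborel) \<partial>lborel_PiM J)"
proof -
  interpret product_sigma_finite "\<lambda>_. lborel :: real measure" by standard
  have "emeasure (lborel_PiM (insert i J)) S = (\<integral>\<^sup>+ z. indicator S z \<partial>lborel_PiM (insert i J))"
    using assms(3) by simp
  also have "\<dots> = (\<integral>\<^sup>+ x. (\<integral>\<^sup>+ y. indicator S (x(i := y)) \<partial>lborel) \<partial>lborel_PiM J)"
    using assms by (intro product_nn_integral_insert) auto
  finally show ?thesis .
qed

lemma emeasure_affine_coordinate_vimage:
  assumes I: "finite I" "i \<in> I" and c: "c \<noteq> 0"
    and g[measurable]: "g \<in> borel_measurable (lborel_PiM I)" and g_indep: "\<And>x y. g (x(i := y)) = g x"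
    and S[measurable]: "S \<in> sets (lborel_PiM I)"
  shows "emeasure (lborel_PiM I) {x \<in> space (lborel_PiM I). x(i := c * x i + g x) \<in> S}
       = ennreal (1 / \<bar>c\<bar>) * emeasure (lborel_PiM I) S"
proof -
  define J where "J = I - {i}"
  have IJ: "I = insert i J" "i \<notin> J" "finite J" using I by (auto simp: J_def)
  define T where "T = {x \<in> space (lborel_PiM I). x(i := c * x i + g x) \<in> S}"
  have "(\<lambda>x. x(i := c * x i + g x)) \<in> lborel_PiM I \<rightarrow>\<^sub>M lborel_PiM I"
    using I(2) by (intro measurable_fun_upd_PiM) simp_all
  then have T[measurable]: "T \<in> sets (lborel_PiM I)"
    unfolding T_def using measurable_sets[OF _ S] by (simp add: vimage_def Int_def conj_commute)
  have upd_meas: "(\<lambda>(x, y). indicator S (x(i := y)) :: ennreal) \<in> borel_measurable (lborel_PiM J \<Otimes>\<^sub>M lborel)"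
  proof -
    have "(\<lambda>(x, y). x(i := y)) \<in> lborel_PiM J \<Otimes>\<^sub>M lborel \<rightarrow>\<^sub>M lborel_PiM I"
      using measurable_add_dim[of i J "\<lambda>_. lborel"] IJ(1) by simp
    from measurable_compose[OF this borel_measurable_indicator[OF S]]
    show ?thesis by (simp add: case_prod_beta')
  qed
  have "emeasure (lborel_PiM I) T = (\<integral>\<^sup>+ x. (\<integral>\<^sup>+ y. indicator T (x(i := y)) \<partial>lborel) \<partial>lborel_PiM J)"
    using IJ T by (simp add: emeasure_PiM_insert_coordinate)
  also have "\<dots> = (\<integral>\<^sup>+ x. (\<integral>\<^sup>+ y. indicator S (x(i := g x + c * y)) \<partial>lborel) \<partial>lborel_PiM J)"
  proof (intro nn_integral_cong)
    fix x y assume "x \<in> space (lborel_PiM J)"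
    then have "x(i := y) \<in> space (lborel_PiM I)" using IJ by (auto simp: space_PiM PiE_def extensional_def)
    then show "indicator T (x(i := y)) = (indicator S (x(i := g x + c * y)) :: ennreal)"
      using g_indep by (auto simp: T_def indicator_def add.commute)
  qed
  also have "\<dots> = (\<integral>\<^sup>+ x. ennreal (1 / \<bar>c\<bar>) * (\<integral>\<^sup>+ y. indicator S (x(i := y)) \<partial>lborel) \<partial>lborel_PiM J)"
  proof (intro nn_integral_cong)
    fix x assume "x \<in> space (lborel_PiM J)"
    then have "(\<lambda>y. x(i := y)) \<in> borel \<rightarrow>\<^sub>M lborel_PiM I"
      using measurable_component_update[of x J "\<lambda>_. lborel" i] IJ by simp
    then have "(\<lambda>y. indicator S (x(i := y)) :: ennreal) \<in> borel_measurable borel" by measurable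
    from nn_integral_real_affine[OF this c, of "g x"]
    show "(\<integral>\<^sup>+ y. indicator S (x(i := g x + c * y)) \<partial>lborel) = ennreal (1 / \<bar>c\<bar>) * (\<integral>\<^sup>+ y. indicator S (x(i := y)) \<partial>lborel)"
      using c by (simp add: ennreal_mult[symmetric] flip: mult.assoc)
  qed
  also have "\<dots> = ennreal (1 / \<bar>c\<bar>) * (\<integral>\<^sup>+ x. (\<integral>\<^sup>+ y. indicator S (x(i := y)) \<partial>lborel) \<partial>lborel_PiM J)"
    using lborel.borel_measurable_nn_integral[OF upd_meas] by (intro nn_integral_cmult) simp
  also have "(\<integral>\<^sup>+ x. (\<integral>\<^sup>+ y. indicator S (x(i := y)) \<partial>lborel) \<partial>lborel_PiM J) = emeasure (lborel_PiM I) S"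
    using IJ S by (simp add: emeasure_PiM_insert_coordinate)
  finally show ?thesis unfolding T_def .
qed

text \<open>\<open>k\<close> is the inverse of the factor by which \<open>f\<close> scales volumes: \<open>1 / |det f|\<close> for an
  invertible linear map.\<close>

definition preimage_scaling :: "'i set \<Rightarrow> (('i \<Rightarrow> real) \<Rightarrow> ('i \<Rightarrow> real)) \<Rightarrow> real \<Rightarrow> bool" where
  "preimage_scaling I f k \<longleftrightarrow> k \<ge> 0 \<and> f \<in> lborel_PiM I \<rightarrow>\<^sub>M lborel_PiM I \<and>
     (\<forall>S \<in> sets (lborel_PiM I).
        emeasure (lborel_PiM I) {x \<in> space (lborel_PiM I). f x \<in> S} = ennreal k * emeasure (lborel_PiM I) S)"

lemma preimage_scaling_measurable:
  "preimage_scaling I f k \<Longrightarrow> f \<in> lborel_PiM I \<rightarrow>\<^sub>M lborel_PiM I"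
  by (simp add: preimage_scaling_def)

lemma preimage_scaling_measure:
  assumes "preimage_scaling I f k" "S \<in> sets (lborel_PiM I)"
  shows "measure (lborel_PiM I) {x \<in> space (lborel_PiM I). f x \<in> S} = k * measure (lborel_PiM I) S"
  using assms by (simp add: preimage_scaling_def measure_def enn2real_mult)

lemma preimage_scaling_comp:
  assumes f: "preimage_scaling I f k1" and g: "preimage_scaling I g k2"
  shows "preimage_scaling I (g \<circ> f) (k1 * k2)"
  unfolding preimage_scaling_def
proof (intro conjI ballI)
  have fm: "f \<in> lborel_PiM I \<rightarrow>\<^sub>M lborel_PiM I" and gm: "g \<in> lborel_PiM I \<rightarrow>\<^sub>M lborel_PiM I"
    using f g by (simp_all add: preimage_scaling_def)
  then show "g \<circ> f \<in> lborel_PiM I \<rightarrow>\<^sub>M lborel_PiM I" by (rule measurable_comp)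
  show "k1 * k2 \<ge> 0" using f g by (simp add: preimage_scaling_def)
  fix S assume S: "S \<in> sets (lborel_PiM I)"
  define G where "G = {y \<in> space (lborel_PiM I). g y \<in> S}"
  have G: "G \<in> sets (lborel_PiM I)"
    using measurable_sets[OF gm S] by (simp add: G_def vimage_def Int_def conj_commute)
  have "{x \<in> space (lborel_PiM I). (g \<circ> f) x \<in> S} = {x \<in> space (lborel_PiM I). f x \<in> G}"
    using measurable_space[OF fm] by (auto simp: G_def)
  also have "emeasure (lborel_PiM I) \<dots> = ennreal k1 * emeasure (lborel_PiM I) G"
    using f G by (simp add: preimage_scaling_def)
  also have "\<dots> = ennreal k1 * (ennreal k2 * emeasure (lborel_PiM I) S)"
    using g S by (simp add: preimage_scaling_def G_def)
  finally show "emeasure (lborel_PiM I) {x \<in> space (lborel_PiM I). (g \<circ> f) x \<in> S} = ennreal (k1 * k2) * emeasure (lborel_PiM I) S"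
    using f g by (simp add: preimage_scaling_def ennreal_mult mult.assoc)
qed

lemma preimage_scaling_affine_coordinate:
  assumes "finite I" "i \<in> I" "c \<noteq> 0"
    and "g \<in> borel_measurable (lborel_PiM I)" "\<And>x y. g (x(i := y)) = g x"
  shows "preimage_scaling I (\<lambda>x. x(i := c * x i + g x)) (1 / \<bar>c\<bar>)"
  using assms emeasure_affine_coordinate_vimage[OF assms] measurable_fun_upd_PiM[of i I]
  by (simp add: preimage_scaling_def)

lemma preimage_scaling_shear:
  assumes "finite I" "i \<in> I" "j \<in> I" "i \<noteq> j"
  shows "preimage_scaling I (\<lambda>x. x(i := x i + p * x j)) 1"
  using preimage_scaling_affine_coordinate[of I i 1 "\<lambda>x. p * x j"] assms by simp

definition scale_coords :: "'i set \<Rightarrow> real \<Rightarrow> ('i \<Rightarrow> real) \<Rightarrow> ('i \<Rightarrow> real)" where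
  "scale_coords J c x = (\<lambda>k. if k \<in> J then c * x k else x k)"

lemma preimage_scaling_scale_coords:
  assumes "finite I" "J \<subseteq> I" "c \<noteq> 0"
  shows "preimage_scaling I (scale_coords J c) ((1 / \<bar>c\<bar>) ^ card J)"
proof -
  have "finite J" using assms finite_subset by blast
  then show ?thesis using assms(2)
  proof (induction J rule: finite_induct)
    case empty
    have "{x \<in> space (lborel_PiM I). x \<in> S} = S" if "S \<in> sets (lborel_PiM I)" for S
      using sets.sets_into_space[OF that] by auto
    then show ?case by (simp add: preimage_scaling_def scale_coords_def)
  next
    case (insert j J)
    have "preimage_scaling I (\<lambda>x. x(j := c * x j + 0)) (1 / \<bar>c\<bar>)"
      using insert assms by (intro preimage_scaling_affine_coordinate) auto
    from preimage_scaling_comp[OF insert.IH this] insert.prems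
    have "preimage_scaling I ((\<lambda>x. x(j := c * x j + 0)) \<circ> scale_coords J c) ((1 / \<bar>c\<bar>) ^ Suc (card J))"
      by (simp add: mult.commute)
    moreover have "(\<lambda>x. x(j := c * x j + 0)) \<circ> scale_coords J c = scale_coords (insert j J) c"
      using insert by (auto simp: scale_coords_def fun_eq_iff)
    ultimately show ?case using insert by simp
  qed
qed

definition givens :: "'i \<Rightarrow> 'i \<Rightarrow> real \<Rightarrow> real \<Rightarrow> ('i \<Rightarrow> real) \<Rightarrow> ('i \<Rightarrow> real)" where
  "givens i j c s x = x(i := c * x i + s * x j, j := - s * x i + c * x j)"

text \<open>A plane rotation is the product of three shears, each of which preserves volume.\<close>

lemma preimage_scaling_givens:
  assumes I: "finite I" "i \<in> I" "j \<in> I" "i \<noteq> j" and s: "s \<noteq> 0" and cs: "c\<^sup>2 + s\<^sup>2 = 1"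
  shows "preimage_scaling I (givens i j c s) 1"
proof -
  define p where "p = (1 - c) / s"
  have pq: "p * s = 1 - c" and ps: "p * (1 + c) = s"
    using s cs by (simp_all add: p_def field_simps power2_eq_square)
  define shear_i where "shear_i = (\<lambda>x. x(i := x i + p * x j))"
  define shear_j where "shear_j = (\<lambda>x. x(j := x j + (- s) * x i))"
  have "preimage_scaling I shear_i 1" "preimage_scaling I shear_j 1"
    unfolding shear_i_def shear_j_def by (rule preimage_scaling_shear; use I in auto)+
  from preimage_scaling_comp[OF preimage_scaling_comp[OF this(1,2)] this(1)]
  have "preimage_scaling I (shear_i \<circ> shear_j \<circ> shear_i) 1" by (simp add: o_assoc)
  moreover have "shear_i \<circ> shear_j \<circ> shear_i = givens i j c s"
  proof (intro ext)
    fix x k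
    have "x i + p * x j + p * (x j - s * (x i + p * x j)) = (1 - p * s) * x i + (p * (1 + (1 - p * s))) * x j"
      by (simp add: algebra_simps)
    then have e_i: "x i + p * x j + p * (x j - s * (x i + p * x j)) = c * x i + s * x j"
      using pq ps by simp
    have "x j - s * (x i + p * x j) = - s * x i + (1 - p * s) * x j"
      by (simp add: algebra_simps)
    then have e_j: "x j - s * (x i + p * x j) = - s * x i + c * x j"
      using pq by simp
    show "(shear_i \<circ> shear_j \<circ> shear_i) x k = givens i j c s x k"
      using I(4) e_i e_j by (auto simp: shear_i_def shear_j_def givens_def)
  qed
  ultimately show ?thesis by simp
qed

lemma sum_givens_mult:
  assumes "finite I" "i \<in> I" "j \<in> I" "i \<noteq> j" and cs: "c\<^sup>2 + s\<^sup>2 = 1"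
  shows "(\<Sum>k\<in>I. givens i j c s x k * givens i j c s y k) = (\<Sum>k\<in>I. x k * y k)"
proof -
  have split: "sum f I = f i + f j + sum f (I - {i, j})" for f :: "'a \<Rightarrow> real"
  proof -
    have "sum f I = f i + f j + sum f (I - {i} - {j})" using assms by (simp add: sum.remove)
    also have "I - {i} - {j} = I - {i, j}" by auto
    finally show ?thesis .
  qed
  let ?G = "givens i j c s"
  have "(\<Sum>k\<in>I. ?G x k * ?G y k) = ?G x i * ?G y i + ?G x j * ?G y j + (\<Sum>k\<in>I - {i, j}. x k * y k)"
    by (subst split) (auto simp: givens_def intro!: sum.cong)
  also have "?G x i * ?G y i + ?G x j * ?G y j = (c\<^sup>2 + s\<^sup>2) * (x i * y i) + (c\<^sup>2 + s\<^sup>2) * (x j * y j)"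
    using assms(4) by (simp add: givens_def algebra_simps power2_eq_square)
  finally show ?thesis using cs split[of "\<lambda>k. x k * y k"] by simp
qed

section \<open>Rotation invariance\<close>

lemma sph_inner_measurable[measurable]: "sph_inner n v \<in> borel_measurable (lborel_PiM {..<n})"
  unfolding sph_inner_def by measurable

lemma sph_norm_measurable[measurable]: "sph_norm n \<in> borel_measurable (lborel_PiM {..<n})"
  unfolding sph_norm_def sph_inner_def by measurable

lemma sph_norm_nonneg: "sph_norm n x \<ge> 0"
  unfolding sph_norm_def sph_inner_def by (simp add: sum_nonneg)

lemma sph_inner_givens:
  assumes "0 < j" "j < n" "c\<^sup>2 + s\<^sup>2 = 1"
  shows "sph_inner n (givens 0 j c s x) (givens 0 j c s y) = sph_inner n x y"
  unfolding sph_inner_def using assms by (intro sum_givens_mult) auto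

text \<open>Radial projection maps \<open>ball_cone n v t\<close> onto the event \<open>|\<langle>v, u\<rangle>| \<ge> t\<close> of the sphere.
  For \<open>t > 0\<close> the origin is excluded because \<open>0 / 0 = 0\<close>.\<close>

definition ball_cone :: "nat \<Rightarrow> (nat \<Rightarrow> real) \<Rightarrow> real \<Rightarrow> (nat \<Rightarrow> real) set" where
  "ball_cone n v t =
     {x \<in> space (lborel_PiM {..<n}). sph_norm n x \<le> 1 \<and> t \<le> \<bar>sph_inner n v x\<bar> / sph_norm n x}"

lemma ball_cone_sets[measurable]: "ball_cone n v t \<in> sets (lborel_PiM {..<n})"
  unfolding ball_cone_def by measurable

lemma measure_ball_cone_givens:
  assumes j: "0 < j" "j < n" and s: "s \<noteq> 0" and cs: "c\<^sup>2 + s\<^sup>2 = 1"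
  shows "measure (lborel_PiM {..<n}) (ball_cone n (givens 0 j c s v) t)
       = measure (lborel_PiM {..<n}) (ball_cone n v t)"
proof -
  let ?G = "givens 0 j c s"
  have G: "preimage_scaling {..<n} ?G 1" using assms by (intro preimage_scaling_givens) auto
  have "sph_norm n (?G x) = sph_norm n x" "sph_inner n (?G v) (?G x) = sph_inner n v x" for x
    using sph_inner_givens[OF j cs] by (simp_all add: sph_norm_def)
  then have "ball_cone n v t = {x \<in> space (lborel_PiM {..<n}). ?G x \<in> ball_cone n (?G v) t}"
    using measurable_space[OF preimage_scaling_measurable[OF G]] by (auto simp: ball_cone_def)
  then show ?thesis using preimage_scaling_measure[OF G] by simp
qed

definition basis0 :: "nat \<Rightarrow> real" where
  "basis0 k = (if k = 0 then 1 else 0)"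

lemma sph_inner_supported_at_0:
  assumes "\<forall>k \<in> {1..<n}. v k = 0"
  shows "sph_inner n v x = (if n = 0 then 0 else v 0 * x 0)"
proof -
  have "sph_inner n v x = (\<Sum>k\<in>{..<n}. if k = 0 then v 0 * x 0 else 0)"
    unfolding sph_inner_def using assms by (intro sum.cong) auto
  then show ?thesis by (simp add: sum.delta)
qed

lemma sph_inner_basis0: "n \<ge> 1 \<Longrightarrow> sph_inner n basis0 x = x 0"
  using sph_inner_supported_at_0[of n basis0 x] by (simp add: basis0_def)

text \<open>Rotations in the planes \<open>(0, j)\<close> move a unit vector to \<open>\<plusminus>basis0\<close>, killing one coordinate
  at a time.\<close>

lemma measure_ball_cone_eq_basis0:
  assumes n: "n \<ge> 1" and v: "sph_inner n v v = 1"
  shows "measure (lborel_PiM {..<n}) (ball_cone n v t) = measure (lborel_PiM {..<n}) (ball_cone n basis0 t)"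
proof -
  have "measure (lborel_PiM {..<n}) (ball_cone n v t) = measure (lborel_PiM {..<n}) (ball_cone n basis0 t)"
    if "card {k \<in> {1..<n}. v k \<noteq> 0} = N" "sph_inner n v v = 1" for N v
    using that
  proof (induction N arbitrary: v)
    case 0
    then have supp: "\<forall>k \<in> {1..<n}. v k = 0" by auto
    have iv: "sph_inner n v x = v 0 * x 0" for x
      using sph_inner_supported_at_0[OF supp] n by simp
    have "(v 0)\<^sup>2 = 1" using 0(2) iv[of v] by (simp add: power2_eq_square)
    then have "\<bar>v 0\<bar> = 1" by (auto simp: power2_eq_1_iff)
    then have "\<bar>sph_inner n v x\<bar> = \<bar>sph_inner n basis0 x\<bar>" for x
      using n by (simp add: iv sph_inner_basis0 abs_mult)
    then show ?case by (simp add: ball_cone_def)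
  next
    case (Suc N)
    have "{k \<in> {1..<n}. v k \<noteq> 0} \<noteq> {}" using Suc.prems(1) by (metis card.empty Zero_not_Suc)
    then obtain j where j: "j \<in> {1..<n}" "v j \<noteq> 0" by blast
    define r where "r = sqrt ((v 0)\<^sup>2 + (v j)\<^sup>2)"
    have r: "r > 0" "r\<^sup>2 = (v 0)\<^sup>2 + (v j)\<^sup>2" using j(2) by (simp_all add: r_def add_nonneg_pos)
    define c where "c = v 0 / r"
    define s where "s = v j / r"
    have s: "s \<noteq> 0" using j(2) r(1) by (simp add: s_def)
    have "c\<^sup>2 + s\<^sup>2 = ((v 0)\<^sup>2 + (v j)\<^sup>2) / r\<^sup>2"
      by (simp add: c_def s_def power_divide add_divide_distrib)
    then have cs: "c\<^sup>2 + s\<^sup>2 = 1" using r j(2) by simp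
    define w where "w = givens 0 j c s v"
    have j': "0 < j" "j < n" using j by auto
    have "w k = (if k = j then 0 else v k)" if "k \<noteq> 0" for k
      using that j' by (simp add: w_def givens_def c_def s_def)
    then have "{k \<in> {1..<n}. w k \<noteq> 0} = {k \<in> {1..<n}. v k \<noteq> 0} - {j}" by (auto split: if_splits)
    then have "card {k \<in> {1..<n}. w k \<noteq> 0} = N" using Suc.prems(1) j by simp
    moreover have "sph_inner n w w = 1" using Suc.prems(2) sph_inner_givens[OF j' cs] by (simp add: w_def)
    ultimately have "measure (lborel_PiM {..<n}) (ball_cone n w t) = measure (lborel_PiM {..<n}) (ball_cone n basis0 t)"
      by (rule Suc.IH)
    then show ?case using measure_ball_cone_givens[OF j' s cs] by (simp add: w_def)
  qed
  then show ?thesis using v by blast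
qed

section \<open>Cylinders and cones around the first axis\<close>

lemma measurable_coordinate_0:
  fixes n :: nat
  assumes "n \<ge> 1"
  shows "(\<lambda>x. x 0) \<in> borel_measurable (lborel_PiM {..<n})"
proof -
  have "(\<lambda>x. x 0) \<in> lborel_PiM {..<n} \<rightarrow>\<^sub>M lborel"
    using assms by (intro measurable_component_singleton) auto
  then show ?thesis by simp
qed

definition perp_sqnorm :: "nat \<Rightarrow> (nat \<Rightarrow> real) \<Rightarrow> real" where
  "perp_sqnorm n x = (\<Sum>i\<in>{1..<n}. (x i)\<^sup>2)"

lemma perp_sqnorm_measurable[measurable]: "perp_sqnorm n \<in> borel_measurable (lborel_PiM {..<n})"
  unfolding perp_sqnorm_def by measurable

lemma perp_sqnorm_nonneg: "perp_sqnorm n x \<ge> 0"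
  unfolding perp_sqnorm_def by (simp add: sum_nonneg)

lemma perp_sqnorm_scale_coords:
  "{1..<n} \<subseteq> J \<Longrightarrow> perp_sqnorm n (scale_coords J c x) = c\<^sup>2 * perp_sqnorm n x"
  unfolding perp_sqnorm_def scale_coords_def
  by (auto simp: sum_distrib_left power_mult_distrib intro!: sum.cong)

lemma sph_norm_split: "n \<ge> 1 \<Longrightarrow> sph_norm n x = sqrt ((x 0)\<^sup>2 + perp_sqnorm n x)"
proof -
  assume "n \<ge> 1"
  then have "{..<n} = insert 0 {1..<n}" by auto
  then show ?thesis by (simp add: sph_norm_def sph_inner_def perp_sqnorm_def power2_eq_square)
qed

definition cylinder :: "nat \<Rightarrow> real \<Rightarrow> real \<Rightarrow> real \<Rightarrow> (nat \<Rightarrow> real) set" where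
  "cylinder n a b r = {x \<in> space (lborel_PiM {..<n}). a \<le> x 0 \<and> x 0 \<le> b \<and> sqrt (perp_sqnorm n x) \<le> r}"

lemma cylinder_sets:
  assumes "n \<ge> 1"
  shows "cylinder n a b r \<in> sets (lborel_PiM {..<n})"
proof -
  note measurable_coordinate_0[OF assms, measurable]
  show ?thesis unfolding cylinder_def by measurable
qed

lemma emeasure_cylinder:
  assumes n: "n \<ge> 1" and "a \<le> b" "r > 0"
  shows "emeasure (lborel_PiM {..<n}) (cylinder n a b r)
       = ennreal ((b - a) * unit_ball_vol (real (n - 1)) * r ^ (n - 1))"
proof -
  define R where "R = {1..<n}"
  have R: "{..<n} = insert 0 R" "0 \<notin> R" "finite R" using n by (auto simp: R_def)
  define Ball where "Ball = {f. sqrt (\<Sum>i\<in>R. (f i)\<^sup>2) \<le> r} \<inter> space (lborel_PiM R)"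
  have "emeasure (lborel_PiM {..<n}) (cylinder n a b r)
      = (\<integral>\<^sup>+ x. (\<integral>\<^sup>+ y. indicator (cylinder n a b r) (x(0 := y)) \<partial>lborel) \<partial>lborel_PiM R)"
    using R cylinder_sets[OF n] by (simp add: emeasure_PiM_insert_coordinate)
  also have "\<dots> = (\<integral>\<^sup>+ x. indicator Ball x * (\<integral>\<^sup>+ y. indicator {a..b} y \<partial>lborel) \<partial>lborel_PiM R)"
  proof (intro nn_integral_cong)
    fix x assume x: "x \<in> space (lborel_PiM R)"
    have "x(0 := y) \<in> space (lborel_PiM {..<n})" for y
      using x R by (auto simp: space_PiM PiE_def extensional_def)
    moreover have "perp_sqnorm n (x(0 := y)) = (\<Sum>i\<in>R. (x i)\<^sup>2)" for y
      unfolding perp_sqnorm_def R_def by (intro sum.cong) auto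
    ultimately have "indicator (cylinder n a b r) (x(0 := y)) = indicator Ball x * (indicator {a..b} y :: ennreal)" for y
      using x by (auto simp: cylinder_def Ball_def indicator_def)
    then show "(\<integral>\<^sup>+ y. indicator (cylinder n a b r) (x(0 := y)) \<partial>lborel)
        = indicator Ball x * (\<integral>\<^sup>+ y. indicator {a..b} y \<partial>lborel)"
      by (simp add: nn_integral_cmult)
  qed
  also have "\<dots> = emeasure (lborel_PiM R) Ball * ennreal (b - a)"
    using assms(2) by (simp add: nn_integral_multc Ball_def)
  also have "emeasure (lborel_PiM R) Ball = ennreal (unit_ball_vol (real (n - 1)) * r ^ (n - 1))"
    using emeasure_cball_aux[OF R(3) assms(3)] by (simp add: Ball_def R_def)
  finally show ?thesis using assms by (simp add: ennreal_mult'[symmetric] mult_ac)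
qed

lemma cylinder_fmeasurable:
  "n \<ge> 1 \<Longrightarrow> a \<le> b \<Longrightarrow> r > 0 \<Longrightarrow> cylinder n a b r \<in> fmeasurable (lborel_PiM {..<n})"
  using emeasure_cylinder cylinder_sets by (intro fmeasurableI) auto

lemma measure_cylinder:
  "n \<ge> 1 \<Longrightarrow> a \<le> b \<Longrightarrow> r > 0 \<Longrightarrow>
    measure (lborel_PiM {..<n}) (cylinder n a b r) = (b - a) * unit_ball_vol (real (n - 1)) * r ^ (n - 1)"
  using emeasure_cylinder by (simp add: measure_def)

definition double_cone :: "nat \<Rightarrow> real \<Rightarrow> real \<Rightarrow> (nat \<Rightarrow> real) set" where
  "double_cone n \<kappa> h =
     {x \<in> space (lborel_PiM {..<n}). 0 < \<bar>x 0\<bar> \<and> \<bar>x 0\<bar> < h \<and> sqrt (perp_sqnorm n x) \<le> \<kappa> * \<bar>x 0\<bar>}"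

lemma double_cone_sets:
  assumes "n \<ge> 1"
  shows "double_cone n \<kappa> h \<in> sets (lborel_PiM {..<n})"
proof -
  note measurable_coordinate_0[OF assms, measurable]
  have "double_cone n \<kappa> h = {x \<in> space (lborel_PiM {..<n}). 0 < \<bar>x 0\<bar> \<and> \<bar>x 0\<bar> < h}
      \<inter> {x \<in> space (lborel_PiM {..<n}). 0 \<le> \<kappa> * \<bar>x 0\<bar> - sqrt (perp_sqnorm n x)}"
    by (auto simp: double_cone_def)
  also have "\<dots> \<in> sets (lborel_PiM {..<n})" by measurable
  finally show ?thesis .
qed

lemma double_cone_mono: "\<kappa> \<le> \<kappa>' \<Longrightarrow> double_cone n \<kappa> h \<subseteq> double_cone n \<kappa>' h"
  unfolding double_cone_def by (auto intro: order_trans mult_right_mono)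

lemma double_cone_subset_cylinder:
  assumes "\<kappa> \<ge> 0"
  shows "double_cone n \<kappa> h \<subseteq> cylinder n (-h) h (\<kappa> * h)"
proof
  fix x assume x: "x \<in> double_cone n \<kappa> h"
  then have "\<kappa> * \<bar>x 0\<bar> \<le> \<kappa> * h" using assms by (simp add: double_cone_def mult_left_mono)
  then show "x \<in> cylinder n (-h) h (\<kappa> * h)" using x by (auto simp: double_cone_def cylinder_def)
qed

lemma double_cone_fmeasurable:
  assumes "n \<ge> 1" "\<kappa> > 0" "h > 0"
  shows "double_cone n \<kappa> h \<in> fmeasurable (lborel_PiM {..<n})"
  using assms double_cone_subset_cylinder[of \<kappa> n h] cylinder_fmeasurable[of n "-h" h "\<kappa> * h"]
  by (intro fmeasurableI2[OF _ _ double_cone_sets]) auto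

lemma measure_double_cone_scale_height:
  assumes n: "n \<ge> 1" and q: "q > 0"
  shows "measure (lborel_PiM {..<n}) (double_cone n \<kappa> (q * h))
       = q ^ n * measure (lborel_PiM {..<n}) (double_cone n \<kappa> h)"
proof -
  let ?f = "scale_coords {..<n} (1 / q)"
  have f: "preimage_scaling {..<n} ?f (q ^ n)"
    using preimage_scaling_scale_coords[of "{..<n}" "{..<n}" "1 / q"] q by simp
  have "x \<in> double_cone n \<kappa> (q * h) \<longleftrightarrow> ?f x \<in> double_cone n \<kappa> h"
    if x: "x \<in> space (lborel_PiM {..<n})" for x
  proof -
    have "?f x \<in> space (lborel_PiM {..<n})"
      using measurable_space[OF preimage_scaling_measurable[OF f] x] .
    moreover have "?f x 0 = x 0 / q" using n by (simp add: scale_coords_def)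
    moreover have "sqrt (perp_sqnorm n (?f x)) = sqrt (perp_sqnorm n x) / q"
    proof -
      have "{1..<n} \<subseteq> {..<n}" by auto
      from perp_sqnorm_scale_coords[OF this] show ?thesis
        using q by (simp add: real_sqrt_mult real_sqrt_divide)
    qed
    ultimately have "?f x \<in> double_cone n \<kappa> h \<longleftrightarrow>
        x 0 \<noteq> 0 \<and> \<bar>x 0\<bar> / q < h \<and> sqrt (perp_sqnorm n x) / q \<le> \<kappa> * \<bar>x 0\<bar> / q"
      using q by (simp add: double_cone_def abs_div)
    also have "\<dots> \<longleftrightarrow> x 0 \<noteq> 0 \<and> \<bar>x 0\<bar> < q * h \<and> sqrt (perp_sqnorm n x) \<le> \<kappa> * \<bar>x 0\<bar>"
      using q by (simp add: pos_divide_less_eq[OF q] divide_le_cancel mult.commute[of h])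
    also have "\<dots> \<longleftrightarrow> x \<in> double_cone n \<kappa> (q * h)"
      using x by (simp add: double_cone_def)
    finally show ?thesis ..
  qed
  moreover have "double_cone n \<kappa> (q * h) \<subseteq> space (lborel_PiM {..<n})"
    by (auto simp: double_cone_def)
  ultimately have "double_cone n \<kappa> (q * h) = {x \<in> space (lborel_PiM {..<n}). ?f x \<in> double_cone n \<kappa> h}"
    by blast
  then show ?thesis using preimage_scaling_measure[OF f double_cone_sets[OF n]] by simp
qed

lemma measure_double_cone_scale_slope:
  assumes n: "n \<ge> 1" and \<sigma>: "\<sigma> > 0"
  shows "measure (lborel_PiM {..<n}) (double_cone n (\<sigma> * \<kappa>) h)
       = \<sigma> ^ (n - 1) * measure (lborel_PiM {..<n}) (double_cone n \<kappa> h)"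
proof -
  let ?f = "scale_coords {1..<n} (1 / \<sigma>)"
  have f: "preimage_scaling {..<n} ?f (\<sigma> ^ (n - 1))"
    using preimage_scaling_scale_coords[of "{..<n}" "{1..<n}" "1 / \<sigma>"] \<sigma> by fastforce
  have "x \<in> double_cone n (\<sigma> * \<kappa>) h \<longleftrightarrow> ?f x \<in> double_cone n \<kappa> h"
    if x: "x \<in> space (lborel_PiM {..<n})" for x
  proof -
    have "?f x \<in> space (lborel_PiM {..<n})"
      using measurable_space[OF preimage_scaling_measurable[OF f] x] .
    moreover have "?f x 0 = x 0" by (simp add: scale_coords_def)
    moreover have "sqrt (perp_sqnorm n (?f x)) = sqrt (perp_sqnorm n x) / \<sigma>"
      using \<sigma> perp_sqnorm_scale_coords[of n "{1..<n}"] by (simp add: real_sqrt_mult real_sqrt_divide)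
    ultimately have "?f x \<in> double_cone n \<kappa> h \<longleftrightarrow>
        0 < \<bar>x 0\<bar> \<and> \<bar>x 0\<bar> < h \<and> sqrt (perp_sqnorm n x) / \<sigma> \<le> \<kappa> * \<bar>x 0\<bar>"
      by (simp add: double_cone_def)
    also have "\<dots> \<longleftrightarrow> x \<in> double_cone n (\<sigma> * \<kappa>) h"
      using x \<sigma> by (simp add: double_cone_def pos_divide_le_eq mult_ac)
    finally show ?thesis ..
  qed
  moreover have "double_cone n (\<sigma> * \<kappa>) h \<subseteq> space (lborel_PiM {..<n})"
    by (auto simp: double_cone_def)
  ultimately have "double_cone n (\<sigma> * \<kappa>) h = {x \<in> space (lborel_PiM {..<n}). ?f x \<in> double_cone n \<kappa> h}"
    by blast
  then show ?thesis using preimage_scaling_measure[OF f double_cone_sets[OF n]] by simp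
qed

lemma double_cone_diff_subset:
  assumes "q \<le> 1" "\<kappa> \<ge> 0"
  shows "double_cone n \<kappa> h - double_cone n \<kappa> (q * h)
       \<subseteq> cylinder n (q * h) h (\<kappa> * h) \<union> cylinder n (-h) (-(q * h)) (\<kappa> * h)"
proof
  fix x assume x: "x \<in> double_cone n \<kappa> h - double_cone n \<kappa> (q * h)"
  then have "\<kappa> * \<bar>x 0\<bar> \<le> \<kappa> * h" "q * h \<le> \<bar>x 0\<bar>"
    using assms by (auto simp: double_cone_def intro: mult_left_mono)
  then show "x \<in> cylinder n (q * h) h (\<kappa> * h) \<union> cylinder n (-h) (-(q * h)) (\<kappa> * h)"
    using x by (cases "x 0 \<ge> 0") (auto simp: double_cone_def cylinder_def)
qed

lemma one_minus_inverse_pow_le_half: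
  assumes "n \<ge> 1"
  shows "(1 - 1 / real n) ^ n \<le> 1 / 2"
proof -
  have "(1 - 1 / real n) ^ n \<le> exp (- (1 / real n)) ^ n"
    using assms exp_ge_add_one_self[of "- (1 / real n)"] by (intro power_mono) auto
  also have "\<dots> = exp (-1)" using assms by (simp add: exp_of_nat_mult[symmetric])
  also have "\<dots> \<le> 1 / 2"
    using exp_ge_add_one_self[of 1] by (simp add: exp_minus field_simps)
  finally show ?thesis .
qed

text \<open>Rather than computing the volume \<open>F\<close> of the cone, compare it with its copy shrunk by the
  factor \<open>q = 1 - 1/n\<close>: the difference \<open>(1 - q^n) F \<ge> F/2\<close> lies in two slabs of width
  \<open>h/n\<close>.\<close>

lemma measure_double_cone_le:
  assumes n: "n \<ge> 2" and \<kappa>: "\<kappa> > 0" and h: "h > 0"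
  shows "measure (lborel_PiM {..<n}) (double_cone n \<kappa> h)
       \<le> 4 * h * unit_ball_vol (real (n - 1)) * (\<kappa> * h) ^ (n - 1) / n"
proof -
  define q where "q = 1 - 1 / real n"
  define F where "F = measure (lborel_PiM {..<n}) (double_cone n \<kappa> h)"
  define slab where "slab = (1 - q) * h * unit_ball_vol (real (n - 1)) * (\<kappa> * h) ^ (n - 1)"
  have n1: "n \<ge> 1" and q: "0 < q" "q \<le> 1" using n by (auto simp: q_def field_simps)
  have "q * h \<le> h" using q h by (simp add: mult_left_le_one_le)
  then have sub: "double_cone n \<kappa> (q * h) \<subseteq> double_cone n \<kappa> h" by (auto simp: double_cone_def)
  have "F - q ^ n * F = measure (lborel_PiM {..<n}) (double_cone n \<kappa> h - double_cone n \<kappa> (q * h))"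
    using measure_double_cone_scale_height[OF n1 q(1)] double_cone_fmeasurable[OF n1 \<kappa> h] double_cone_sets[OF n1] sub
    by (subst measure_Diff) (auto simp: F_def fmeasurable_def)
  also have "\<dots> \<le> measure (lborel_PiM {..<n}) (cylinder n (q * h) h (\<kappa> * h) \<union> cylinder n (-h) (-(q * h)) (\<kappa> * h))"
    using double_cone_diff_subset[OF q(2)] \<kappa> h q n1
    by (intro measure_mono_fmeasurable fmeasurable.Un cylinder_fmeasurable double_cone_sets sets.Diff)
      (auto intro: mult_left_le_one_le)
  also have "\<dots> \<le> measure (lborel_PiM {..<n}) (cylinder n (q * h) h (\<kappa> * h))
      + measure (lborel_PiM {..<n}) (cylinder n (-h) (-(q * h)) (\<kappa> * h))"
    using n1 by (intro measure_Un_le cylinder_sets)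
  also have "\<dots> = 2 * slab"
    using measure_cylinder[OF n1 \<open>q * h \<le> h\<close>, of "\<kappa> * h"] measure_cylinder[OF n1, of "-h" "-(q * h)" "\<kappa> * h"]
      \<open>q * h \<le> h\<close> \<kappa> h by (simp add: slab_def algebra_simps)
  finally have "F * (1 - q ^ n) \<le> 2 * slab" by (simp add: algebra_simps)
  moreover have "F * (1 / 2) \<le> F * (1 - q ^ n)"
    using one_minus_inverse_pow_le_half[OF n1] by (intro mult_left_mono) (auto simp: q_def F_def)
  ultimately have "F \<le> 4 * slab" by linarith
  then show ?thesis by (simp add: F_def slab_def q_def)
qed

section \<open>Volume estimates for the cones\<close>

lemma ball_cone_antimono: "\<alpha> \<le> \<beta> \<Longrightarrow> ball_cone n v \<beta> \<subseteq> ball_cone n v \<alpha>"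
  unfolding ball_cone_def by auto

lemma mem_ball_cone_basis0_iff:
  assumes n: "n \<ge> 1" and t: "t > 0"
  shows "x \<in> ball_cone n basis0 t \<longleftrightarrow> x \<in> space (lborel_PiM {..<n}) \<and>
    (x 0)\<^sup>2 + perp_sqnorm n x \<le> 1 \<and> x 0 \<noteq> 0 \<and> t * sqrt ((x 0)\<^sup>2 + perp_sqnorm n x) \<le> \<bar>x 0\<bar>"
proof -
  define N where "N = sqrt ((x 0)\<^sup>2 + perp_sqnorm n x)"
  have "\<bar>x 0\<bar> \<le> N"
    unfolding N_def using perp_sqnorm_nonneg[of n x] real_sqrt_le_mono[of "(x 0)\<^sup>2"] by simp
  have "t \<le> \<bar>x 0\<bar> / N \<longleftrightarrow> x 0 \<noteq> 0 \<and> t * N \<le> \<bar>x 0\<bar>"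
  proof (cases "N = 0")
    case True
    then show ?thesis using t \<open>\<bar>x 0\<bar> \<le> N\<close> by auto
  next
    case False
    then have "N > 0" using \<open>\<bar>x 0\<bar> \<le> N\<close> abs_ge_zero[of "x 0"] by linarith
    then have "0 < t * N" using t by simp
    with \<open>N > 0\<close> show ?thesis by (auto simp: pos_le_divide_eq)
  qed
  then show ?thesis
    using n by (simp add: ball_cone_def sph_norm_split sph_inner_basis0 N_def)
qed

lemma ball_cone_basis0_subset_cylinder:
  assumes "n \<ge> 1" "t > 0"
  shows "ball_cone n basis0 t \<subseteq> cylinder n (-1) 1 1"
proof
  fix x assume "x \<in> ball_cone n basis0 t"
  then have x: "x \<in> space (lborel_PiM {..<n})" "(x 0)\<^sup>2 + perp_sqnorm n x \<le> 1"
    using mem_ball_cone_basis0_iff[OF assms] by auto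
  moreover have "0 \<le> perp_sqnorm n x" "0 \<le> (x 0)\<^sup>2" by (simp_all add: perp_sqnorm_nonneg)
  ultimately have "(x 0)\<^sup>2 \<le> 1" "perp_sqnorm n x \<le> 1" by linarith+
  then have "\<bar>x 0\<bar> \<le> 1" "perp_sqnorm n x \<le> 1" by (simp_all add: abs_square_le_1)
  then show "x \<in> cylinder n (-1) 1 1" using x by (auto simp: cylinder_def)
qed

lemma ball_cone_basis0_fmeasurable:
  assumes "n \<ge> 1" "t > 0"
  shows "ball_cone n basis0 t \<in> fmeasurable (lborel_PiM {..<n})"
  using ball_cone_basis0_subset_cylinder[OF assms] cylinder_fmeasurable[OF assms(1), of "-1" 1 1]
  by (intro fmeasurableI2[OF _ _ ball_cone_sets]) auto

text \<open>The cotangent of the half-opening angle of the cone \<open>|x 0| \<ge> t |x|\<close>.\<close>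

definition cone_slope :: "real \<Rightarrow> real" where
  "cone_slope t = sqrt (1 - t\<^sup>2) / t"

lemma cone_slope_pos: "0 < t \<Longrightarrow> t < 1 \<Longrightarrow> cone_slope t > 0"
  unfolding cone_slope_def by (simp add: power_less_one_iff)

lemma cone_slope_mult: "0 < t \<Longrightarrow> cone_slope t * t = sqrt (1 - t\<^sup>2)"
  unfolding cone_slope_def by simp

lemma cone_slope_antimono:
  assumes "0 < \<alpha>" "\<alpha> \<le> \<beta>" "\<beta> < 1"
  shows "cone_slope \<beta> \<le> cone_slope \<alpha>"
proof -
  have "\<alpha>\<^sup>2 \<le> \<beta>\<^sup>2" "\<beta>\<^sup>2 < 1" using assms by (simp_all add: power_mono power_less_one_iff)
  moreover from this have "\<alpha>\<^sup>2 \<le> 1" by linarith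
  ultimately show ?thesis unfolding cone_slope_def using assms by (intro frac_le) auto
qed

lemma mult_sqrt_le_iff_cone_slope:
  assumes t: "0 < t" "t < 1" and X: "0 \<le> X" and Q: "0 \<le> Q"
  shows "t * sqrt (X\<^sup>2 + Q) \<le> X \<longleftrightarrow> sqrt Q \<le> cone_slope t * X"
proof -
  have t2: "t\<^sup>2 < 1" using t by (simp add: power_less_one_iff)
  have "t * sqrt (X\<^sup>2 + Q) \<le> X \<longleftrightarrow> sqrt (X\<^sup>2 + Q) \<le> X / t" using t by (simp add: field_simps)
  also have "\<dots> \<longleftrightarrow> X\<^sup>2 + Q \<le> (X / t)\<^sup>2" using X Q t by (intro real_sqrt_le_iff') auto
  also have "\<dots> \<longleftrightarrow> Q \<le> (1 - t\<^sup>2) * X\<^sup>2 / t\<^sup>2" using t by (simp add: field_simps)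
  also have "\<dots> \<longleftrightarrow> Q \<le> (cone_slope t * X)\<^sup>2"
    using t2 by (simp add: cone_slope_def power_mult_distrib power_divide)
  also have "\<dots> \<longleftrightarrow> sqrt Q \<le> cone_slope t * X"
    using X Q t t2 by (intro real_sqrt_le_iff'[symmetric]) (auto simp: cone_slope_def)
  finally show ?thesis .
qed

text \<open>Points of \<open>ball_cone n basis0 \<alpha>\<close> with \<open>|x 0| < \<alpha>\<close> lie inside the ball automatically, so
  only the slope of the cone matters there; the points with \<open>|x 0| \<ge> \<alpha>\<close> that fail the angle
  condition for \<open>\<beta>\<close> have \<open>|x 0| < \<beta>\<close>.\<close>

lemma ball_cone_basis0_diff_subset:
  assumes n: "n \<ge> 1" and ab: "0 < \<alpha>" "\<alpha> \<le> \<beta>" "\<beta> < 1"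
  defines "r \<equiv> sqrt (1 - \<alpha>\<^sup>2)"
  shows "ball_cone n basis0 \<alpha> - ball_cone n basis0 \<beta>
    \<subseteq> (double_cone n (cone_slope \<alpha>) \<alpha> - double_cone n (cone_slope \<beta>) \<alpha>)
      \<union> cylinder n \<alpha> \<beta> r \<union> cylinder n (-\<beta>) (-\<alpha>) r"
proof
  fix x assume x: "x \<in> ball_cone n basis0 \<alpha> - ball_cone n basis0 \<beta>"
  define X where "X = \<bar>x 0\<bar>"
  define Q where "Q = perp_sqnorm n x"
  have Q0: "Q \<ge> 0" using perp_sqnorm_nonneg by (simp add: Q_def)
  have b0: "0 < \<beta>" using ab by simp
  have in_\<alpha>: "x \<in> space (lborel_PiM {..<n})" "X\<^sup>2 + Q \<le> 1" "0 < X" "\<alpha> * sqrt (X\<^sup>2 + Q) \<le> X"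
    using x mem_ball_cone_basis0_iff[OF n ab(1), of x] by (auto simp: X_def Q_def)
  have not_\<beta>: "\<not> \<beta> * sqrt (X\<^sup>2 + Q) \<le> X"
    using x mem_ball_cone_basis0_iff[OF n b0, of x] in_\<alpha> by (auto simp: X_def Q_def)
  have "sqrt (X\<^sup>2 + Q) \<le> 1" using in_\<alpha>(2) by simp
  then have "X < \<beta>" using not_\<beta> b0 by (smt (verit) mult_left_le)
  show "x \<in> (double_cone n (cone_slope \<alpha>) \<alpha> - double_cone n (cone_slope \<beta>) \<alpha>)
      \<union> cylinder n \<alpha> \<beta> r \<union> cylinder n (-\<beta>) (-\<alpha>) r"
  proof (cases "X < \<alpha>")
    case True
    have "sqrt Q \<le> cone_slope \<alpha> * X" "\<not> sqrt Q \<le> cone_slope \<beta> * X"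
      using mult_sqrt_le_iff_cone_slope[OF ab(1) _ _ Q0] mult_sqrt_le_iff_cone_slope[OF b0 ab(3) _ Q0]
        in_\<alpha>(3,4) not_\<beta> ab by auto
    then show ?thesis using True in_\<alpha>(1,3) by (simp add: double_cone_def X_def Q_def)
  next
    case False
    then have "\<alpha>\<^sup>2 \<le> X\<^sup>2" using ab by (simp add: power_mono)
    then have "sqrt Q \<le> r" using in_\<alpha>(2) by (simp add: r_def)
    then show ?thesis
      using False \<open>X < \<beta>\<close> in_\<alpha>(1) by (cases "x 0 \<ge> 0") (auto simp: cylinder_def X_def Q_def)
  qed
qed

lemma cylinder_subset_ball_cone_basis0:
  assumes n: "n \<ge> 1" and "0 < \<beta>" "0 \<le> \<delta>" "\<beta> + \<delta> \<le> 1"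
  shows "cylinder n \<beta> (\<beta> + \<delta>) (sqrt (1 - (\<beta> + \<delta>)\<^sup>2)) \<subseteq> ball_cone n basis0 \<beta>"
proof
  fix x assume x: "x \<in> cylinder n \<beta> (\<beta> + \<delta>) (sqrt (1 - (\<beta> + \<delta>)\<^sup>2))"
  then have "(x 0)\<^sup>2 \<le> (\<beta> + \<delta>)\<^sup>2" "perp_sqnorm n x \<le> 1 - (\<beta> + \<delta>)\<^sup>2"
    using assms by (auto simp: cylinder_def intro: power_mono)
  then have "(x 0)\<^sup>2 + perp_sqnorm n x \<le> 1" by simp
  moreover from this have "\<beta> * sqrt ((x 0)\<^sup>2 + perp_sqnorm n x) \<le> \<beta>"
    using assms by (simp add: mult_left_le)
  then have "\<beta> * sqrt ((x 0)\<^sup>2 + perp_sqnorm n x) \<le> \<bar>x 0\<bar>"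
    using x by (auto simp: cylinder_def)
  ultimately show "x \<in> ball_cone n basis0 \<beta>"
    using x assms mem_ball_cone_basis0_iff[OF n \<open>0 < \<beta>\<close>] by (auto simp: cylinder_def)
qed

lemma measure_ball_cone_basis0_diff_le:
  assumes n: "n \<ge> 1" and ab: "0 < \<alpha>" "\<alpha> \<le> \<beta>" "\<beta> < 1"
  defines "r \<equiv> sqrt (1 - \<alpha>\<^sup>2)"
  shows "measure (lborel_PiM {..<n}) (ball_cone n basis0 \<alpha>) - measure (lborel_PiM {..<n}) (ball_cone n basis0 \<beta>)
    \<le> measure (lborel_PiM {..<n}) (double_cone n (cone_slope \<alpha>) \<alpha>)
      - measure (lborel_PiM {..<n}) (double_cone n (cone_slope \<beta>) \<alpha>)
      + 2 * (\<beta> - \<alpha>) * unit_ball_vol (real (n - 1)) * r ^ (n - 1)"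
proof -
  let ?m = "measure (lborel_PiM {..<n})"
  let ?A = "\<lambda>t. ball_cone n basis0 t"
  let ?F = "\<lambda>t. double_cone n (cone_slope t) \<alpha>"
  have b0: "0 < \<beta>" and r: "r > 0" using ab by (simp_all add: r_def power_less_one_iff)
  have F_fin: "?F \<alpha> \<in> fmeasurable (lborel_PiM {..<n})"
    using ab by (intro double_cone_fmeasurable n cone_slope_pos) auto
  have F_sub: "?F \<beta> \<subseteq> ?F \<alpha>" using cone_slope_antimono[OF ab] by (rule double_cone_mono)
  have "?m (?A \<alpha>) - ?m (?A \<beta>) = ?m (?A \<alpha> - ?A \<beta>)"
    using ball_cone_basis0_fmeasurable[OF n ab(1)] ball_cone_antimono[OF ab(2)]
    by (subst measure_Diff) (auto simp: fmeasurable_def)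
  also have "\<dots> \<le> ?m ((?F \<alpha> - ?F \<beta>) \<union> cylinder n \<alpha> \<beta> r \<union> cylinder n (-\<beta>) (-\<alpha>) r)"
    using ball_cone_basis0_diff_subset[OF n ab] F_fin double_cone_sets[OF n] ab r
    by (intro measure_mono_fmeasurable fmeasurable.Un cylinder_fmeasurable n fmeasurable_Diff sets.Diff)
      (auto simp: r_def)
  also have "\<dots> \<le> ?m (?F \<alpha> - ?F \<beta>) + ?m (cylinder n \<alpha> \<beta> r) + ?m (cylinder n (-\<beta>) (-\<alpha>) r)"
    using double_cone_sets[OF n] cylinder_sets[OF n]
    by (intro order_trans[OF measure_Un_le] add_right_mono measure_Un_le) auto
  also have "?m (?F \<alpha> - ?F \<beta>) = ?m (?F \<alpha>) - ?m (?F \<beta>)"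
    using F_fin F_sub double_cone_sets[OF n] by (subst measure_Diff) (auto simp: fmeasurable_def)
  finally show ?thesis
    using measure_cylinder[OF n ab(2) r] measure_cylinder[OF n _ r, of "-\<beta>" "-\<alpha>"] ab(2)
    by (simp add: algebra_simps)
qed

lemma measure_ball_cone_basis0_ge_cylinder:
  assumes n: "n \<ge> 1" and "0 < \<beta>" "0 < \<delta>" "\<beta> + \<delta> < 1"
  shows "\<delta> * unit_ball_vol (real (n - 1)) * sqrt (1 - (\<beta> + \<delta>)\<^sup>2) ^ (n - 1)
       \<le> measure (lborel_PiM {..<n}) (ball_cone n basis0 \<beta>)"
proof -
  define r where "r = sqrt (1 - (\<beta> + \<delta>)\<^sup>2)"
  have "(\<beta> + \<delta>)\<^sup>2 < 1" using assms by (simp add: power_less_one_iff)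
  then have "r > 0" by (simp add: r_def)
  then have "\<delta> * unit_ball_vol (real (n - 1)) * r ^ (n - 1) = measure (lborel_PiM {..<n}) (cylinder n \<beta> (\<beta> + \<delta>) r)"
    using measure_cylinder[OF n, of \<beta> "\<beta> + \<delta>" r] assms by simp
  also have "\<dots> \<le> measure (lborel_PiM {..<n}) (ball_cone n basis0 \<beta>)"
    using cylinder_subset_ball_cone_basis0[OF n, of \<beta> \<delta>] ball_cone_basis0_fmeasurable[OF n] cylinder_sets[OF n] assms
    by (intro measure_mono_fmeasurable) (auto simp: r_def)
  finally show ?thesis by (simp add: r_def)
qed

lemma cone_slope_ratio_ge:
  assumes \<epsilon>: "0 < \<epsilon>" "\<epsilon> < 1" and \<alpha>: "0 < \<alpha>" and \<beta>: "\<beta> = (1 + \<epsilon>) * \<alpha>" "\<beta> \<le> 1/2"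
  shows "1 - 2 * \<epsilon> \<le> cone_slope \<beta> / cone_slope \<alpha>"
proof -
  define A where "A = 1 - \<alpha>\<^sup>2"
  define B where "B = 1 - \<beta>\<^sup>2"
  have "\<alpha>\<^sup>2 \<le> \<beta>\<^sup>2" using \<alpha> \<beta> \<epsilon> by (simp add: power_mono)
  moreover have "\<beta>\<^sup>2 \<le> 1/4" using power_mono[of \<beta> "1/2" 2] \<alpha> \<beta> \<epsilon> by (simp add: power_divide)
  ultimately have A: "A \<ge> 3/4" "\<alpha>\<^sup>2 \<le> A / 3" and B: "0 < B" "B \<le> A"
    by (simp_all add: A_def B_def)
  have "A - B = \<alpha>\<^sup>2 * (2 * \<epsilon> + \<epsilon>\<^sup>2)"
    by (simp add: A_def B_def \<beta> power2_eq_square algebra_simps)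
  also have "\<dots> \<le> A / 3 * (3 * \<epsilon>)"
    using A \<epsilon> by (intro mult_mono) (auto simp: power2_eq_square)
  finally have "A - B \<le> A * \<epsilon>" by simp
  moreover have "A * ((1 - 2 * \<epsilon>) * (1 + \<epsilon>)) \<le> A * (1 - \<epsilon>)"
    using A \<epsilon> by (intro mult_left_mono) (auto simp: algebra_simps)
  ultimately have "A * (1 - 2 * \<epsilon>) * (1 + \<epsilon>) \<le> B" by (simp add: algebra_simps)
  then have "(1 - 2 * \<epsilon>) * (1 + \<epsilon>) \<le> B / A" using A by (simp add: field_simps)
  also have "B / A \<le> sqrt B / sqrt A"
  proof -
    have "0 \<le> sqrt B / sqrt A" "sqrt B / sqrt A \<le> 1" using A B by simp_all
    then have "(sqrt B / sqrt A) * (sqrt B / sqrt A) \<le> sqrt B / sqrt A" by (metis mult_left_le_one_le)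
    then show ?thesis using A B by (simp add: power_divide flip: power2_eq_square)
  qed
  also have "sqrt B / sqrt A = (1 + \<epsilon>) * (cone_slope \<beta> / cone_slope \<alpha>)"
  proof -
    have "sqrt A > 0" "\<beta> > 0" using A \<alpha> \<beta> \<epsilon> by simp_all
    then have "cone_slope \<beta> / cone_slope \<alpha> = (sqrt B / sqrt A) * (\<alpha> / \<beta>)"
      using \<alpha> by (simp add: cone_slope_def A_def B_def field_simps)
    moreover have "\<alpha> / \<beta> = 1 / (1 + \<epsilon>)" using \<alpha> \<epsilon> by (simp add: \<beta>)
    ultimately show ?thesis using \<epsilon> by simp
  qed
  finally have "(1 + \<epsilon>) * (1 - 2 * \<epsilon>) \<le> (1 + \<epsilon>) * (cone_slope \<beta> / cone_slope \<alpha>)"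
    by (simp only: mult.commute)
  then show ?thesis by (rule mult_left_le_imp_le) (use \<epsilon> in simp)
qed

text \<open>The lower bound for \<open>ball_cone n basis0 \<beta>\<close> uses the slab of width \<open>\<delta> = 1/(8n\<beta>)\<close> above
  height \<open>\<beta>\<close>; its radius is comparable to \<open>sqrt (1 - \<alpha>\<^sup>2)\<close> because \<open>n ((\<beta> + \<delta>)\<^sup>2 - \<alpha>\<^sup>2)\<close>
  stays bounded.\<close>

lemma shifted_radius_pow_ge:
  assumes n: "n \<ge> 1" and \<epsilon>: "0 < \<epsilon>" "\<epsilon> < 1" and \<alpha>: "0 < \<alpha>" and \<beta>: "\<beta> = (1 + \<epsilon>) * \<alpha>" "\<beta> \<le> 1/2"
    and large: "1 < real n * \<alpha>\<^sup>2" and small: "real n * \<alpha>\<^sup>2 * \<epsilon> \<le> 1 / (8 * exp 2)"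
    and \<delta>: "\<delta> = 1 / (8 * real n * \<beta>)"
  shows "\<beta> + \<delta> < 1" "sqrt (1 - \<alpha>\<^sup>2) ^ (n - 1) / 2 \<le> sqrt (1 - (\<beta> + \<delta>)\<^sup>2) ^ (n - 1)"
proof -
  have b0: "\<beta> > 0" and ab: "\<alpha> \<le> \<beta>" using \<alpha> \<epsilon> \<beta> by simp_all
  have "real n * \<alpha>\<^sup>2 \<le> real n * \<beta>\<^sup>2" using \<alpha> ab by (intro mult_left_mono power_mono) auto
  then have n\<beta>2: "1 < real n * \<beta>\<^sup>2" using large by linarith
  moreover have "real n * \<beta>\<^sup>2 \<le> real n * \<beta> * (1/2)"
    unfolding power2_eq_square mult.assoc[symmetric] using \<beta> b0 by (intro mult_left_mono) auto
  ultimately have "2 < real n * \<beta>" by linarith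
  then have "\<delta> \<le> 1/16" "\<delta> > 0" using \<delta> b0 by (simp_all add: field_simps)
  then have \<beta>\<delta>: "\<beta> + \<delta> \<le> 5/8" "\<alpha> \<le> \<beta> + \<delta>" using \<beta> ab by simp_all
  then show "\<beta> + \<delta> < 1" by simp
  have "4 \<le> exp (2::real)"
    using exp_ge_add_one_self[of 1] mult_mono[of 2 "exp 1" 2 "exp (1::real)"] by (simp add: exp_add[symmetric])
  then have "real n * \<alpha>\<^sup>2 * \<epsilon> * 32 \<le> real n * \<alpha>\<^sup>2 * \<epsilon> * (8 * exp 2)"
    using \<epsilon> by (intro mult_left_mono) auto
  moreover have "real n * \<alpha>\<^sup>2 * \<epsilon> * (8 * exp 2) \<le> 1" using small by (simp add: field_simps)
  ultimately have "3 * (real n * \<alpha>\<^sup>2 * \<epsilon>) \<le> 3/32" by linarith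
  moreover have "real n * \<alpha>\<^sup>2 * (2 * \<epsilon> + \<epsilon>\<^sup>2) \<le> 3 * (real n * \<alpha>\<^sup>2 * \<epsilon>)"
    using \<epsilon> mult_left_mono[of "2 * \<epsilon> + \<epsilon>\<^sup>2" "3 * \<epsilon>" "real n * \<alpha>\<^sup>2"]
    by (simp add: power2_eq_square)
  moreover have "real n * \<delta>\<^sup>2 \<le> 1/64" using n\<beta>2 b0 \<delta> by (simp add: power2_eq_square field_simps)
  moreover have "2 * real n * \<beta> * \<delta> = 1/4" using n b0 \<delta> by simp
  moreover have "real n * ((\<beta> + \<delta>)\<^sup>2 - \<alpha>\<^sup>2)
      = real n * \<alpha>\<^sup>2 * (2 * \<epsilon> + \<epsilon>\<^sup>2) + 2 * real n * \<beta> * \<delta> + real n * \<delta>\<^sup>2"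
    by (simp add: \<beta>(1) power2_eq_square algebra_simps)
  ultimately have gap: "real n * ((\<beta> + \<delta>)\<^sup>2 - \<alpha>\<^sup>2) \<le> 23/64" by linarith
  define A where "A = 1 - \<alpha>\<^sup>2"
  define R where "R = (1 - (\<beta> + \<delta>)\<^sup>2) / A"
  have "\<alpha> \<le> 1/2" using ab \<beta>(2) by linarith
  then have "\<alpha>\<^sup>2 \<le> 1/4" using \<alpha> power_mono[of \<alpha> "1/2" 2] by (simp add: power_divide)
  then have A: "A \<ge> 3/4" by (simp add: A_def)
  have "(\<beta> + \<delta>)\<^sup>2 \<le> (5/8)\<^sup>2" "\<alpha>\<^sup>2 \<le> (\<beta> + \<delta>)\<^sup>2" using \<beta>\<delta> \<alpha> by (simp_all add: power_mono)
  then have "0 \<le> 1 - (\<beta> + \<delta>)\<^sup>2" "1 - (\<beta> + \<delta>)\<^sup>2 \<le> A" by (simp_all add: power_divide A_def)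
  then have R: "0 \<le> R" "R \<le> 1" using A by (simp_all add: R_def)
  have "real (n - 1) * (1 - R) \<le> real n * (1 - R)" using R by (intro mult_right_mono) auto
  also have "real n * (1 - R) = real n * ((\<beta> + \<delta>)\<^sup>2 - \<alpha>\<^sup>2) / A"
    using A by (simp add: R_def A_def field_simps)
  also have "\<dots> \<le> (23/64) / (3/4)" using gap A by (intro frac_le) auto
  finally have "1/2 \<le> R ^ (n - 1)"
    using Bernoulli_inequality[of "R - 1" "n - 1"] R by (simp add: algebra_simps)
  also have "\<dots> \<le> sqrt R ^ (n - 1)"
    using R by (intro power_mono real_le_rsqrt) (simp_all add: power2_eq_square mult_left_le_one_le)
  finally have "sqrt A ^ (n - 1) / 2 \<le> (sqrt R * sqrt A) ^ (n - 1)"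
    using A by (simp add: power_mult_distrib field_simps)
  then show "sqrt (1 - \<alpha>\<^sup>2) ^ (n - 1) / 2 \<le> sqrt (1 - (\<beta> + \<delta>)\<^sup>2) ^ (n - 1)"
    using A by (simp add: R_def A_def real_sqrt_mult[symmetric])
qed

lemma measure_ball_cone_basis0_gap_le:
  assumes n: "n \<ge> 2" and \<epsilon>: "0 < \<epsilon>" "\<epsilon> < 1" and \<alpha>: "0 < \<alpha>"
    and \<beta>: "\<beta> = (1 + \<epsilon>) * \<alpha>" "\<beta> \<le> 1/2"
  shows "measure (lborel_PiM {..<n}) (ball_cone n basis0 \<alpha>) - measure (lborel_PiM {..<n}) (ball_cone n basis0 \<beta>)
    \<le> 10 * \<epsilon> * \<alpha> * unit_ball_vol (real (n - 1)) * sqrt (1 - \<alpha>\<^sup>2) ^ (n - 1)"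
proof -
  let ?F = "\<lambda>\<kappa>. measure (lborel_PiM {..<n}) (double_cone n \<kappa> \<alpha>)"
  define K where "K = unit_ball_vol (real (n - 1)) * sqrt (1 - \<alpha>\<^sup>2) ^ (n - 1)"
  define \<sigma> where "\<sigma> = cone_slope \<beta> / cone_slope \<alpha>"
  have n1: "n \<ge> 1" and ab: "\<alpha> \<le> \<beta>" "\<beta> < 1" using n \<alpha> \<epsilon> \<beta> by auto
  then have "\<alpha> < 1" by linarith
  have \<kappa>: "cone_slope \<alpha> > 0" "cone_slope \<beta> > 0"
    using \<alpha> ab \<open>\<alpha> < 1\<close> by (simp_all add: cone_slope_pos)
  have \<sigma>: "1 - 2 * \<epsilon> \<le> \<sigma>" "0 < \<sigma>"
    using cone_slope_ratio_ge[OF \<epsilon> \<alpha> \<beta>] \<kappa> by (simp_all add: \<sigma>_def)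
  have "?F (cone_slope \<beta>) = \<sigma> ^ (n - 1) * ?F (cone_slope \<alpha>)"
    using measure_double_cone_scale_slope[OF n1 \<sigma>(2), of "cone_slope \<alpha>" \<alpha>] \<kappa> by (simp add: \<sigma>_def)
  then have "?F (cone_slope \<alpha>) - ?F (cone_slope \<beta>) = (1 - \<sigma> ^ (n - 1)) * ?F (cone_slope \<alpha>)"
    by (simp add: algebra_simps)
  also have "\<dots> \<le> (2 * real n * \<epsilon>) * ?F (cone_slope \<alpha>)"
  proof (rule mult_right_mono)
    have "real (n - 1) * (2 * \<epsilon>) \<le> real n * (2 * \<epsilon>)" using \<epsilon> by (intro mult_right_mono) auto
    moreover have "real (n - 1) * (- 2 * \<epsilon>) \<le> real (n - 1) * (\<sigma> - 1)"
      using \<sigma>(1) by (intro mult_left_mono) auto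
    ultimately show "1 - \<sigma> ^ (n - 1) \<le> 2 * real n * \<epsilon>"
      using Bernoulli_inequality[of "\<sigma> - 1" "n - 1"] \<sigma>(2) by simp
  qed simp
  also have "\<dots> \<le> (2 * real n * \<epsilon>) * (4 * \<alpha> * K / n)"
    using measure_double_cone_le[OF n \<kappa>(1) \<alpha>] \<epsilon>
    by (intro mult_left_mono) (simp_all add: K_def cone_slope_mult \<alpha>)
  also have "\<dots> = 8 * \<epsilon> * \<alpha> * K" using n by simp
  finally show ?thesis
    using measure_ball_cone_basis0_diff_le[OF n1 \<alpha> ab] \<beta>(1) by (simp add: K_def algebra_simps)
qed

lemma measure_ball_cone_basis0_lower_bound:
  assumes n: "n \<ge> 1" and \<epsilon>: "0 < \<epsilon>" "\<epsilon> < 1" and \<alpha>: "0 < \<alpha>"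
    and \<beta>: "\<beta> = (1 + \<epsilon>) * \<alpha>" "\<beta> \<le> 1/2"
    and large: "1 < real n * \<alpha>\<^sup>2" and small: "real n * \<alpha>\<^sup>2 * \<epsilon> \<le> 1 / (8 * exp 2)"
  shows "unit_ball_vol (real (n - 1)) * sqrt (1 - \<alpha>\<^sup>2) ^ (n - 1) / (16 * real n * \<beta>)
    \<le> measure (lborel_PiM {..<n}) (ball_cone n basis0 \<beta>)"
proof -
  define \<delta> where "\<delta> = 1 / (8 * real n * \<beta>)"
  have "\<beta> > 0" "\<delta> > 0" using \<alpha> \<epsilon> \<beta> n by (simp_all add: \<delta>_def)
  note radius = shifted_radius_pow_ge[OF n \<epsilon> \<alpha> \<beta> large small \<delta>_def]
  have "unit_ball_vol (real (n - 1)) * sqrt (1 - \<alpha>\<^sup>2) ^ (n - 1) / (16 * real n * \<beta>)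
      = \<delta> * unit_ball_vol (real (n - 1)) * (sqrt (1 - \<alpha>\<^sup>2) ^ (n - 1) / 2)"
    by (simp add: \<delta>_def)
  also have "\<dots> \<le> \<delta> * unit_ball_vol (real (n - 1)) * sqrt (1 - (\<beta> + \<delta>)\<^sup>2) ^ (n - 1)"
    using radius(2) \<open>\<delta> > 0\<close> by (intro mult_left_mono) auto
  also have "\<dots> \<le> measure (lborel_PiM {..<n}) (ball_cone n basis0 \<beta>)"
    using measure_ball_cone_basis0_ge_cylinder[OF n \<open>\<beta> > 0\<close> \<open>\<delta> > 0\<close> radius(1)] .
  finally show ?thesis .
qed

lemma measure_ball_cone_basis0_ratio:
  assumes n: "n \<ge> 1" and \<epsilon>: "0 < \<epsilon>" "\<epsilon> < 1" and \<alpha>: "1 / sqrt (real n) < \<alpha>"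
    and \<beta>: "\<beta> = (1 + \<epsilon>) * \<alpha>" "\<beta> \<le> 1/2" and small: "real n * \<alpha>\<^sup>2 * \<epsilon> \<le> 1 / (8 * exp 2)"
  shows "0 < measure (lborel_PiM {..<n}) (ball_cone n basis0 \<beta>)"
    and "measure (lborel_PiM {..<n}) (ball_cone n basis0 \<beta>) \<le> measure (lborel_PiM {..<n}) (ball_cone n basis0 \<alpha>)"
    and "measure (lborel_PiM {..<n}) (ball_cone n basis0 \<alpha>)
      \<le> (1 + 320 * real n * \<alpha>\<^sup>2 * \<epsilon>) * measure (lborel_PiM {..<n}) (ball_cone n basis0 \<beta>)"
proof -
  let ?A = "\<lambda>t. measure (lborel_PiM {..<n}) (ball_cone n basis0 t)"
  define K where "K = unit_ball_vol (real (n - 1)) * sqrt (1 - \<alpha>\<^sup>2) ^ (n - 1)"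
  have "0 < 1 / sqrt (real n)" using n by simp
  then have \<alpha>0: "0 < \<alpha>" using \<alpha> by linarith
  have ab: "\<alpha> \<le> \<beta>" "0 < \<beta>" using \<alpha>0 \<epsilon> \<beta> by simp_all
  have "1 / real n < \<alpha>\<^sup>2"
    using power_strict_mono[OF \<alpha>, of 2] n by (simp add: power_divide)
  then have large: "1 < real n * \<alpha>\<^sup>2" using n by (simp add: field_simps)
  have "\<alpha>\<^sup>2 \<le> 1/4" using power_mono[of \<alpha> "1/2" 2] \<alpha>0 ab \<beta>(2) by (simp add: power_divide)
  then have "real n * \<alpha>\<^sup>2 \<le> real n * (1/4)" by (intro mult_left_mono) auto
  then have "n \<ge> 2" using large by linarith
  have "\<alpha> < 1" using ab \<beta>(2) by simp
  then have K: "K > 0" using \<alpha>0 by (simp add: K_def power_less_one_iff)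
  have lower: "K / (16 * real n * \<beta>) \<le> ?A \<beta>"
    using measure_ball_cone_basis0_lower_bound[OF n \<epsilon> \<alpha>0 \<beta> large small] by (simp add: K_def)
  moreover have "0 < K / (16 * real n * \<beta>)" using K ab n by simp
  ultimately show "0 < ?A \<beta>" by linarith
  show "?A \<beta> \<le> ?A \<alpha>"
    using ball_cone_antimono[OF ab(1)] ball_cone_basis0_fmeasurable[OF n \<alpha>0]
    by (intro measure_mono_fmeasurable) auto
  have "?A \<alpha> - ?A \<beta> \<le> 10 * \<epsilon> * \<alpha> * K"
    using measure_ball_cone_basis0_gap_le[OF \<open>n \<ge> 2\<close> \<epsilon> \<alpha>0 \<beta>] by (simp add: K_def mult.assoc)
  also have "\<dots> = 160 * real n * \<alpha> * \<beta> * \<epsilon> * (K / (16 * real n * \<beta>))"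
    using n ab by (simp add: field_simps)
  also have "\<dots> \<le> 320 * real n * \<alpha>\<^sup>2 * \<epsilon> * ?A \<beta>"
  proof (rule mult_mono)
    show "160 * real n * \<alpha> * \<beta> * \<epsilon> \<le> 320 * real n * \<alpha>\<^sup>2 * \<epsilon>"
    proof -
      have "160 * real n * \<alpha> * \<beta> * \<epsilon> = (160 * real n * \<alpha>\<^sup>2 * \<epsilon>) * (1 + \<epsilon>)"
        by (simp add: \<beta>(1) power2_eq_square)
      also have "\<dots> \<le> (160 * real n * \<alpha>\<^sup>2 * \<epsilon>) * 2" using \<epsilon> by (intro mult_left_mono) auto
      finally show ?thesis by simp
    qed
  qed (use lower \<epsilon> \<alpha>0 ab K in auto)
  finally show "?A \<alpha> \<le> (1 + 320 * real n * \<alpha>\<^sup>2 * \<epsilon>) * ?A \<beta>" by (simp add: algebra_simps)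
qed

section \<open>Tail probabilities on the sphere\<close>

lemma unit_ball_vol_of_nat_neq_0: "unit_ball_vol (real n) \<noteq> 0"
  using unit_ball_vol_pos[of "real n"] by linarith

lemma emeasure_unit_ball_Rn: "emeasure (lborel_PiM {..<n}) (unit_ball_Rn n) = ennreal (unit_ball_vol (real n))"
proof -
  have "unit_ball_Rn n = {f. sqrt (\<Sum>i\<in>{..<n}. (f i)\<^sup>2) \<le> 1} \<inter> space (lborel_PiM {..<n})"
    unfolding unit_ball_Rn_def lebesgue_Rn_def sph_norm_def sph_inner_def by (auto simp: power2_eq_square)
  then show ?thesis using emeasure_cball_aux[of "{..<n}" 1] by simp
qed

lemma sphere_tail_eq_measure_ball_cone:
  "sphere_tail n v t = measure (lborel_PiM {..<n}) (ball_cone n v t) / unit_ball_vol (real n)"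
proof -
  let ?M = "lborel_PiM {..<n}"
  let ?B = "unit_ball_Rn n"
  define proj where "proj = (\<lambda>x. restrict (\<lambda>i. x i / sph_norm n x) {..<n})"
  define S where "S = {u \<in> space ?M. t \<le> \<bar>sph_inner n v u\<bar>}"
  have proj: "proj \<in> ?M \<rightarrow>\<^sub>M ?M" unfolding proj_def by (rule measurable_restrict) simp
  have S: "S \<in> sets ?M" unfolding S_def by measurable
  have B: "emeasure ?M ?B \<noteq> 0" "emeasure ?M ?B \<noteq> \<infinity>"
    using emeasure_unit_ball_Rn[of n] unit_ball_vol_of_nat_neq_0[of n] by auto
  have "sphere_tail n v t = measure (distr (uniform_measure ?M ?B) ?M proj) S"
    unfolding sphere_tail_def unif_sphere_def S_def proj_def lebesgue_Rn_def by simp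
  also have "\<dots> = measure ?M (?B \<inter> (proj -` S \<inter> space ?M)) / measure ?M ?B"
    using measurable_sets[OF proj S] B proj S
    by (simp add: measure_distr measure_uniform_measure measurable_cong_sets[OF sets_uniform_measure refl])
  also have "?B \<inter> (proj -` S \<inter> space ?M) = ball_cone n v t"
  proof -
    have "sph_inner n v (proj x) = sph_inner n v x / sph_norm n x" for x
      unfolding sph_inner_def proj_def by (simp add: sum_divide_distrib)
    moreover have "proj x \<in> space ?M" if "x \<in> space ?M" for x
      using measurable_space[OF proj that] .
    ultimately show ?thesis
      unfolding unit_ball_Rn_def ball_cone_def S_def lebesgue_Rn_def
      by (auto simp: abs_div abs_of_nonneg[OF sph_norm_nonneg])
  qed
  finally show ?thesis by (simp add: measure_def emeasure_unit_ball_Rn)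
qed

theorem lemmaD1:
  shows "\<exists>C::real. \<forall>(n::nat) (v::nat \<Rightarrow> real) (\<epsilon>::real) (\<alpha>::real) (\<beta>::real).
    sph_norm n v = 1 \<and> 0 < \<epsilon> \<and> \<epsilon> < 1 \<and>
    1 / sqrt (real n) < \<alpha> \<and> \<alpha> \<le> \<beta> \<and> \<beta> \<le> 1/2 \<and> \<beta> = (1 + \<epsilon>) * \<alpha> \<and>
    real n * \<alpha>^2 * \<epsilon> \<le> 1 / (8 * exp 2)
    \<longrightarrow> 1 \<le> sphere_tail n v \<alpha> / sphere_tail n v \<beta> \<and>
        sphere_tail n v \<alpha> / sphere_tail n v \<beta> \<le> 1 + C * real n * \<alpha>^2 * \<epsilon>"
proof (intro exI[of _ 320] allI impI, elim conjE)
  fix n v and \<epsilon> \<alpha> \<beta> :: real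
  assume v: "sph_norm n v = 1" and \<epsilon>: "0 < \<epsilon>" "\<epsilon> < 1" and \<alpha>: "1 / sqrt (real n) < \<alpha>"
    and \<beta>: "\<beta> \<le> 1/2" "\<beta> = (1 + \<epsilon>) * \<alpha>" and small: "real n * \<alpha>^2 * \<epsilon> \<le> 1 / (8 * exp 2)"
  have n: "n \<ge> 1" using v by (cases n) (simp_all add: sph_norm_def sph_inner_def)
  have "sph_inner n v v = 1" using v by (simp add: sph_norm_def)
  then have tail: "sphere_tail n v t = measure (lborel_PiM {..<n}) (ball_cone n basis0 t) / unit_ball_vol (real n)" for t
    by (simp add: sphere_tail_eq_measure_ball_cone measure_ball_cone_eq_basis0[OF n])
  note ratio = measure_ball_cone_basis0_ratio[OF n \<epsilon> \<alpha> \<beta>(2,1) small]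
  show "1 \<le> sphere_tail n v \<alpha> / sphere_tail n v \<beta> \<and>
      sphere_tail n v \<alpha> / sphere_tail n v \<beta> \<le> 1 + 320 * real n * \<alpha>^2 * \<epsilon>"
    unfolding tail using ratio unit_ball_vol_of_nat_neq_0[of n] by (simp add: field_simps)
qed

end
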